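(* Assume the setting in the context. Let $x_0\in\partial A$ and let $V\subset\mathcal M$ be open with $x_0\in V$. Then there exists an open set $W\subset\mathcal M$ with $x_0\in W$, $\overline W\subset V$, $v(\partial W)=0$, $\tilde v(\partial_{\partial A}(W\cap\partial A))=0$, and $\limsup_{r\downarrow0}r^{d-2}\kappa(\partial_{\partial A}(W\cap\partial A),r)<\infty$.
   Context: Let $2\le d\le m$. $\mathcal M\subset\mathbb R^m$ is a $d$-dimensional $C^2$ submanifold of $\mathbb R^m$, closed in $\mathbb R^m$, with induced Riemannian metric; ${\rm dist}$ geodetic distance, $B(x,r):=\{y\in\mathcal M:{\rm dist}(x,y)\le r\}$, $v$ Riemannian volume. For $D\subset\mathcal M$: $\overline D$ closure, $D^o:=\mathcal M\setminus\overline{\mathcal M\setminus D}$, $\partial D:=\overline D\setminus D^o$. $A\subset\mathcal M$ is a compact $C^2$ submanifold-with-boundary of $\mathcal M$ (for each $y\in\partial A$ there is a chart $(U,g)$ of $\mathcal M$ with $0\in U$, $g(0)=y$, $g(U\cap\mathbb H)=g(U)\cap A$, $\mathbb H=\mathbb R^{d-1}\times[0,\infty)$); $\tilde v$ is the Riemannian surface measure on $\partial A$. For $D\subset\mathcal M$, $\partial_{\partial A}(D\cap\partial A):=\overline{D\cap\partial A}\cap\overline{\partial A\setminus D}$. For $D\subset\mathcal M$ and $r>0$, the covering number $\kappa(D,r)$ is the minimal $m\in\mathbb N$ such that there exist $x_1,\dots,x_m\in D$ with $D\subset\bigcup_{i=1}^mB(x_i,r)$. *)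

theory Defs
  imports "HOL-Analysis.Analysis"
begin

definition C1_map :: "'x::euclidean_space set \<Rightarrow> ('x \<Rightarrow> 'y::real_normed_vector) \<Rightarrow> bool" where
  "C1_map U f \<longleftrightarrow> (\<exists>f'. (\<forall>x\<in>U. (f has_derivative blinfun_apply (f' x)) (at x)) \<and> continuous_on U f')"

definition C2_map :: "'x::euclidean_space set \<Rightarrow> ('x \<Rightarrow> 'y::real_normed_vector) \<Rightarrow> bool" where
  "C2_map U f \<longleftrightarrow> (\<exists>f' f''. (\<forall>x\<in>U. (f has_derivative blinfun_apply (f' x)) (at x))
      \<and> (\<forall>x\<in>U. (f' has_derivative blinfun_apply (f'' x)) (at x)) \<and> continuous_on U f'')"

definition regular_param :: "'a::euclidean_space set \<Rightarrow> (real^'n) set \<Rightarrow> (real^'n \<Rightarrow> 'a) \<Rightarrow> bool" where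
  "regular_param N U g \<longleftrightarrow> open U \<and> g ` U \<subseteq> N \<and> openin (top_of_set N) (g ` U)
     \<and> (\<exists>h. homeomorphism U (g ` U) g h) \<and> (\<forall>u\<in>U. inj (frechet_derivative g (at u)))"

definition chart1 :: "'a::euclidean_space set \<Rightarrow> (real^'n) set \<Rightarrow> (real^'n \<Rightarrow> 'a) \<Rightarrow> bool" where
  "chart1 N U g \<longleftrightarrow> regular_param N U g \<and> C1_map U g"

definition chart2 :: "'a::euclidean_space set \<Rightarrow> (real^'n) set \<Rightarrow> (real^'n \<Rightarrow> 'a) \<Rightarrow> bool" where
  "chart2 N U g \<longleftrightarrow> regular_param N U g \<and> C2_map U g"

text \<open>M is a C^2 submanifold of dimension CARD('n).\<close>
definition C2_submanifold :: "'n::finite itself \<Rightarrow> 'a::euclidean_space set \<Rightarrow> bool" where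
  "C2_submanifold _ M \<longleftrightarrow> (\<forall>y\<in>M. \<exists>(U::(real^'n) set) g. chart2 M U g \<and> y \<in> g ` U)"

definition mclosure :: "'a::topological_space set \<Rightarrow> 'a set \<Rightarrow> 'a set" where
  "mclosure M D = (top_of_set M) closure_of D"

definition minterior :: "'a::topological_space set \<Rightarrow> 'a set \<Rightarrow> 'a set" where
  "minterior M D = M - mclosure M (M - D)"

definition mbdry :: "'a::topological_space set \<Rightarrow> 'a set \<Rightarrow> 'a set" where
  "mbdry M D = mclosure M D - minterior M D"

definition C2_submfd_with_bdry :: "'n::finite itself \<Rightarrow> 'a::euclidean_space set \<Rightarrow> 'a set \<Rightarrow> bool" where
  "C2_submfd_with_bdry _ M A \<longleftrightarrow> A \<subseteq> M \<and>
     (\<forall>y\<in>mbdry M A. \<exists>(U::(real^'n) set) g k. chart2 M U g \<and> 0 \<in> U \<and> g 0 = y \<and>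
          g ` (U \<inter> {x. 0 \<le> x $ k}) = g ` U \<inter> A)"

text \<open>The relative boundary inside the boundary of A.\<close>
definition bdry_rel :: "'a::topological_space set \<Rightarrow> 'a set \<Rightarrow> 'a set \<Rightarrow> 'a set" where
  "bdry_rel M A D = mclosure M (D \<inter> mbdry M A) \<inter> mclosure M (mbdry M A - D)"

definition gram_jac :: "(real^'n \<Rightarrow> 'a::euclidean_space) \<Rightarrow> real^'n \<Rightarrow> real" where
  "gram_jac g u = sqrt (det (\<chi> i j. frechet_derivative g (at u) (axis i 1) \<bullet> frechet_derivative g (at u) (axis j 1)))"

text \<open>Riemannian volume of E w.r.t. the metric induced on the CARD('n)-dimensional
  submanifold N: supremum over finite disjoint families of pieces of E lying in chart images.\<close>
definition riem_vol :: "'n::finite itself \<Rightarrow> 'a::euclidean_space set \<Rightarrow> 'a set \<Rightarrow> ennreal" where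
  "riem_vol _ N E = Sup {(\<Sum>i<k. \<integral>\<^sup>+ u. indicator (U i \<inter> g i -` P i) u * ennreal (gram_jac (g i) u) \<partial>lborel) | k
        (U :: nat \<Rightarrow> (real^'n) set) g P.
        (\<forall>i<k. chart1 N (U i) (g i) \<and> P i \<subseteq> E \<inter> g i ` U i) \<and> disjoint_family_on P {..<k}}"

text \<open>Length of a piecewise C^1 path, geodesic distance (\<infinity> if no path), geodesic ball.\<close>
definition path_len :: "(real \<Rightarrow> 'a::euclidean_space) \<Rightarrow> real" where
  "path_len \<gamma> = integral {0..1} (\<lambda>t. norm (vector_derivative \<gamma> (at t)))"

definition gdist :: "'a::euclidean_space set \<Rightarrow> 'a \<Rightarrow> 'a \<Rightarrow> ereal" where
  "gdist M x y = Inf {ereal (path_len \<gamma>) | \<gamma>. valid_path \<gamma> \<and> path_image \<gamma> \<subseteq> M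
        \<and> pathstart \<gamma> = x \<and> pathfinish \<gamma> = y}"

definition gball :: "'a::euclidean_space set \<Rightarrow> 'a \<Rightarrow> real \<Rightarrow> 'a set" where
  "gball M x r = {y \<in> M. gdist M x y \<le> ereal r}"

text \<open>Covering number (\<infinity> if no finite covering exists).\<close>
definition covnum :: "'a::euclidean_space set \<Rightarrow> 'a set \<Rightarrow> real \<Rightarrow> enat" where
  "covnum M D r = Inf {enat (card X) | X. finite X \<and> X \<subseteq> D \<and> D \<subseteq> (\<Union>x\<in>X. gball M x r)}"

end

theory Submission
  imports Defs
begin

text \<open>Take a boundary chart g of A with g 0 = x0, and let W be the image of a small open cube
  around 0. The boundary of W lies in the image of the frontier of the cube, a Lebesgue null set,
  and g is Lipschitz; hence it has Riemannian volume zero. Since g maps the hyperplane x$k = 0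
  onto the boundary of A, the relative boundary of W inside the boundary of A lies in the image
  of the frontier of a (d-1)-dimensional cube, again a Lipschitz image of a null set. Covering
  that frontier by grid cells of side proportional to r gives O(r^(2-d)) geodesic balls of
  radius r.\<close>

lemma C2_map_imp_C1_map: "C2_map U g \<Longrightarrow> C1_map U g"
  unfolding C2_map_def C1_map_def
  by (meson continuous_at_imp_continuous_on has_derivative_continuous)

lemma chart2_imp_chart1: "chart2 N U g \<Longrightarrow> chart1 N U g"
  unfolding chart2_def chart1_def using C2_map_imp_C1_map by blast

lemma C1_mapE:
  assumes "C1_map U g"
  obtains f' where "\<And>x. x \<in> U \<Longrightarrow> (g has_derivative blinfun_apply (f' x)) (at x)" "continuous_on U f'"
  using assms unfolding C1_map_def by blast

lemma regular_param_continuous_on: "regular_param N U g \<Longrightarrow> continuous_on U g"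
  unfolding regular_param_def homeomorphism_def by blast

lemma regular_param_inj_on: "regular_param N U g \<Longrightarrow> inj_on g U"
  unfolding regular_param_def homeomorphism_def by (metis inj_on_inverseI)

lemma regular_param_openin_image:
  assumes "regular_param N U g" "open S" "S \<subseteq> U"
  shows "openin (top_of_set N) (g ` S)"
proof -
  obtain h where hom: "homeomorphism U (g ` U) g h" and oN: "openin (top_of_set N) (g ` U)"
    using assms(1) unfolding regular_param_def by blast
  have "openin (top_of_set (g ` U)) (g ` S)"
    by (rule homeomorphism_imp_open_map[OF hom open_subset[OF assms(3,2)]])
  then show ?thesis using oN by (rule openin_trans)
qed

lemma mbdry_eq_mclosure_Int: "mbdry M D = mclosure M D \<inter> mclosure M (M - D)"
proof -
  have "mclosure M D \<subseteq> M"
    unfolding mclosure_def using closure_of_subset_topspace by fastforce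
  then show ?thesis unfolding mbdry_def minterior_def by blast
qed

lemma closedin_mclosure: "closedin (top_of_set M) (mclosure M D)"
  unfolding mclosure_def by (rule closedin_closure_of)

lemma closedin_mbdry: "closedin (top_of_set M) (mbdry M D)"
  unfolding mbdry_eq_mclosure_Int by (intro closedin_Int closedin_mclosure)

lemma mclosure_mono: "D \<subseteq> E \<Longrightarrow> mclosure M D \<subseteq> mclosure M E"
  unfolding mclosure_def by (rule closure_of_mono)

lemma mclosure_disjoint_openin:
  assumes "openin (top_of_set M) T" "T \<inter> D = {}" "p \<in> T"
  shows "p \<notin> mclosure M D"
  using assms unfolding mclosure_def in_closure_of by blast

lemma bdry_rel_subset_mbdry: "bdry_rel M A W \<subseteq> mbdry M A \<inter> mbdry M W"
proof -
  have "mclosure M (W \<inter> mbdry M A) \<subseteq> mbdry M A"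
    unfolding mclosure_def using closedin_mbdry by (rule closure_of_minimal[OF Int_lower2])
  moreover have "mbdry M A \<subseteq> M"
    using closedin_subset[OF closedin_mbdry] by simp
  then have "mclosure M (mbdry M A - W) \<subseteq> mclosure M (M - W)" by (intro mclosure_mono) blast
  moreover have "mclosure M (W \<inter> mbdry M A) \<subseteq> mclosure M W" by (intro mclosure_mono) blast
  ultimately show ?thesis unfolding bdry_rel_def mbdry_eq_mclosure_Int[of M W] by blast
qed

lemma bdry_rel_subset: "bdry_rel M A W \<subseteq> M"
  using bdry_rel_subset_mbdry closedin_subset[OF closedin_mbdry] by fastforce

lemma regular_param_in_mclosure_lower_half:
  fixes g :: "real^'n::finite \<Rightarrow> 'a::euclidean_space"
  assumes rp: "regular_param M U g" and x: "x \<in> U" "x $ k = 0"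
  shows "g x \<in> mclosure M (g ` (U \<inter> {y. y $ k < 0}))"
  unfolding mclosure_def in_closure_of
proof (intro conjI allI impI)
  have oU: "open U" and gU: "g ` U \<subseteq> M" using rp unfolding regular_param_def by auto
  then show "g x \<in> topspace (top_of_set M)" using x by auto
  fix T assume T: "g x \<in> T \<and> openin (top_of_set M) T"
  then obtain Op where Op: "open Op" "T = M \<inter> Op" using openin_open by blast
  have "open (U \<inter> g -` Op)"
    by (rule continuous_open_preimage[OF regular_param_continuous_on[OF rp] oU Op(1)])
  moreover have "x \<in> U \<inter> g -` Op" using x T Op(2) by blast
  ultimately obtain r where r: "r > 0" "ball x r \<subseteq> U \<inter> g -` Op"
    using open_contains_ball by blast
  define y where "y = x - (r/2) *\<^sub>R axis k 1"
  have "y \<in> ball x r" using r(1) unfolding y_def by (simp add: dist_norm)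
  then have "y \<in> U" "g y \<in> Op" using r by auto
  moreover have "y $ k < 0" using r(1) x(2) unfolding y_def by simp
  ultimately show "\<exists>z. z \<in> g ` (U \<inter> {y. y $ k < 0}) \<and> z \<in> T" using gU Op(2) by blast
qed

text \<open>The open half spaces x$k > 0 and x$k < 0 are mapped onto open subsets of M lying inside
  and outside A respectively; the hyperplane is approached from both sides.\<close>
lemma boundary_chart_mbdry_iff:
  fixes g :: "real^'n::finite \<Rightarrow> 'a::euclidean_space"
  assumes rp: "regular_param M U g" and hs: "g ` (U \<inter> {x. 0 \<le> x $ k}) = g ` U \<inter> A"
    and x: "x \<in> U"
  shows "g x \<in> mbdry M A \<longleftrightarrow> x $ k = 0"
proof -
  have oU: "open U" and gU: "g ` U \<subseteq> M" using rp unfolding regular_param_def by auto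
  have pos_A: "g ` (U \<inter> {x. 0 < x $ k}) \<subseteq> A" using hs by auto
  have neg_not_A: "g ` (U \<inter> {x. x $ k < 0}) \<inter> A = {}"
  proof -
    have "g y \<notin> A" if y: "y \<in> U" "y $ k < 0" for y
    proof
      assume "g y \<in> A"
      then have "g y \<in> g ` (U \<inter> {x. 0 \<le> x $ k})" using hs y(1) by blast
      then obtain y' where "y' \<in> U" "0 \<le> y' $ k" "g y' = g y" by auto
      then show False using regular_param_inj_on[OF rp] y unfolding inj_on_def by force
    qed
    then show ?thesis by blast
  qed
  have half_open: "openin (top_of_set M) (g ` (U \<inter> H))" if "open H" for H
    by (intro regular_param_openin_image[OF rp] open_Int oU that) auto
  show ?thesis
  proof (cases "x $ k" "0 :: real" rule: linorder_cases)
    case less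
    have "g x \<notin> mclosure M A"
      by (rule mclosure_disjoint_openin[OF half_open[OF open_halfspace_component_lt_cart] neg_not_A])
        (use x less in auto)
    then show ?thesis using less unfolding mbdry_eq_mclosure_Int by simp
  next
    case greater
    have "g x \<notin> mclosure M (M - A)"
      by (rule mclosure_disjoint_openin[OF half_open[OF open_halfspace_component_gt_cart]])
        (use x greater pos_A in auto)
    then show ?thesis using greater unfolding mbdry_eq_mclosure_Int by simp
  next
    case equal
    have "g x \<in> A" using hs x equal by auto
    then have "g x \<in> mclosure M A"
      using x gU unfolding mclosure_def in_closure_of by auto
    moreover have "g ` (U \<inter> {y. y $ k < 0}) \<subseteq> M - A" using neg_not_A gU by blast
    then have "g x \<in> mclosure M (M - A)"
      using regular_param_in_mclosure_lower_half[OF rp x equal] mclosure_mono by blast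
    ultimately show ?thesis using equal unfolding mbdry_eq_mclosure_Int by simp
  qed
qed

lemma regular_param_image_mclosure_mbdry:
  assumes rp: "regular_param M U g" and "open S" "compact K" "S \<subseteq> K" "K \<subseteq> U"
  shows "mclosure M (g ` S) \<subseteq> g ` K" and "mbdry M (g ` S) \<subseteq> g ` (K - S)"
proof -
  have gU: "g ` U \<subseteq> M" using rp unfolding regular_param_def by blast
  have "compact (g ` K)"
    by (rule compact_continuous_image[OF continuous_on_subset[OF regular_param_continuous_on[OF rp] assms(5)] assms(3)])
  moreover have "g ` K \<subseteq> M" using gU assms(5) by blast
  ultimately have "closedin (top_of_set M) (g ` K)"
    by (simp add: closed_subset compact_imp_closed)
  then show cl: "mclosure M (g ` S) \<subseteq> g ` K"
    unfolding mclosure_def using assms(4) by (simp add: closure_of_minimal image_mono)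
  have "openin (top_of_set M) (g ` S)"
    using regular_param_openin_image[OF rp assms(2)] assms(4,5) by (meson order_trans)
  then have "g ` S \<subseteq> M" and "closedin (top_of_set M) (M - g ` S)"
    using openin_closedin_eq[of "top_of_set M" "g ` S"] by simp_all
  then have "minterior M (g ` S) = g ` S"
    unfolding minterior_def mclosure_def by (simp add: closure_of_closedin double_diff)
  then show "mbdry M (g ` S) \<subseteq> g ` (K - S)"
    unfolding mbdry_def using cl by blast
qed

lemma C1_map_remainder_Lipschitz_near:
  assumes der: "\<And>x. x \<in> U \<Longrightarrow> (g has_derivative blinfun_apply (f' x)) (at x)"
    and cont: "continuous_on U f'" and "open U" "u \<in> U" "e > 0"
  obtains d where "d > 0" "ball u d \<subseteq> U"
    "\<And>v w. v \<in> ball u d \<Longrightarrow> w \<in> ball u d \<Longrightarrow>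
       norm ((g v - f' u v) - (g w - f' u w)) \<le> e * norm (v - w)"
proof -
  have "continuous (at u) f'"
    using cont assms(3,4) continuous_on_eq_continuous_at by blast
  then obtain d1 where d1: "d1 > 0" "\<And>v. dist v u < d1 \<Longrightarrow> dist (f' v) (f' u) < e"
    using assms(5) unfolding continuous_at_eps_delta by blast
  obtain d2 where d2: "d2 > 0" "ball u d2 \<subseteq> U" using assms(3,4) open_contains_ball by blast
  define d where "d = min d1 d2"
  have bU: "ball u d \<subseteq> U" using d2 d_def by auto
  show thesis
  proof (rule that)
    show "d > 0" using d1 d2 d_def by auto
    show "ball u d \<subseteq> U" by (rule bU)
    fix v w assume "v \<in> ball u d" "w \<in> ball u d"
    then show "norm ((g v - f' u v) - (g w - f' u w)) \<le> e * norm (v - w)"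
    proof (intro differentiable_bound[where S = "ball u d" and f' = "\<lambda>x. blinfun_apply (f' x - f' u)"])
      fix x assume x: "x \<in> ball u d"
      then have "((\<lambda>x. g x - f' u x) has_derivative (\<lambda>h. f' x h - f' u h)) (at x)"
        using bU by (intro has_derivative_diff der bounded_linear_imp_has_derivative blinfun.bounded_linear_right) auto
      moreover have "blinfun_apply (f' x - f' u) = (\<lambda>h. f' x h - f' u h)"
        by (rule ext) (simp add: blinfun.diff_left)
      ultimately show "((\<lambda>x. g x - f' u x) has_derivative blinfun_apply (f' x - f' u)) (at x within ball u d)"
        by (simp add: has_derivative_at_withinI)
      have "dist x u < d1" using x d_def by (simp add: dist_commute)
      then show "onorm (blinfun_apply (f' x - f' u)) \<le> e"
        using d1(2)[of x] by (simp add: norm_blinfun.rep_eq[symmetric] dist_norm)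
    qed auto
  qed
qed

text \<open>The differential at u is injective, hence bounded below by some B > 0, and near u the
  C^1 remainder is B/2-Lipschitz.\<close>
lemma chart1_local_lower_Lipschitz:
  fixes g :: "real^'m::finite \<Rightarrow> 'a::euclidean_space"
  assumes "chart1 N U g" "u \<in> U"
  obtains d c where "d > 0" "c > 0" "ball u d \<subseteq> U"
    "\<And>v w. v \<in> ball u d \<Longrightarrow> w \<in> ball u d \<Longrightarrow> c * norm (v - w) \<le> norm (g v - g w)"
proof -
  have oU: "open U" and inj: "inj (frechet_derivative g (at u))" and C1: "C1_map U g"
    using assms unfolding chart1_def regular_param_def by auto
  obtain f' where der: "\<And>x. x \<in> U \<Longrightarrow> (g has_derivative blinfun_apply (f' x)) (at x)"
    and cont: "continuous_on U f'" using C1_mapE[OF C1] by blast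
  have "inj (blinfun_apply (f' u))"
    using inj frechet_derivative_at[OF der[OF assms(2)]] by simp
  then obtain B where B: "B > 0" "\<And>x. B * norm x \<le> norm (f' u x)"
    using linear_inj_bounded_below_pos[of "blinfun_apply (f' u)"]
    by (metis blinfun.bounded_linear_right bounded_linear.linear)
  obtain d where d: "d > 0" "ball u d \<subseteq> U"
    and rem: "\<And>v w. v \<in> ball u d \<Longrightarrow> w \<in> ball u d \<Longrightarrow>
       norm ((g v - f' u v) - (g w - f' u w)) \<le> B/2 * norm (v - w)"
    using C1_map_remainder_Lipschitz_near[OF der cont oU assms(2), of "B/2"] B(1) by auto
  show thesis
  proof (rule that[OF d(1) _ d(2)])
    show "B/2 > 0" using B by simp
    fix v w assume vw: "v \<in> ball u d" "w \<in> ball u d"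
    have "g v - g w = f' u (v - w) + ((g v - f' u v) - (g w - f' u w))"
      by (simp add: blinfun.diff_right)
    then have "norm (f' u (v - w)) \<le> norm (g v - g w) + norm ((g v - f' u v) - (g w - f' u w))"
      by (metis add_diff_cancel_right' norm_triangle_ineq4)
    then show "B/2 * norm (v - w) \<le> norm (g v - g w)"
      using B(2)[of "v - w"] rem[OF vw] by simp
  qed
qed

lemma chart1_lower_Lipschitz_on_open_nbhd:
  fixes g :: "real^'m::finite \<Rightarrow> 'a::euclidean_space"
  assumes ch: "chart1 N U g" and u: "u \<in> U"
  obtains Q c where "open Q" "g u \<in> Q" "c > 0"
    "\<And>v w. v \<in> U \<Longrightarrow> w \<in> U \<Longrightarrow> g v \<in> Q \<Longrightarrow> g w \<in> Q \<Longrightarrow> c * norm (v - w) \<le> norm (g v - g w)"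
proof -
  have rp: "regular_param N U g" using ch unfolding chart1_def by blast
  obtain d c where dc: "d > 0" "c > 0" "ball u d \<subseteq> U"
      "\<And>v w. v \<in> ball u d \<Longrightarrow> w \<in> ball u d \<Longrightarrow> c * norm (v - w) \<le> norm (g v - g w)"
    using chart1_local_lower_Lipschitz[OF ch u] by blast
  have "openin (top_of_set N) (g ` ball u d)"
    using regular_param_openin_image[OF rp open_ball dc(3)] .
  then obtain Q where Q: "open Q" "g ` ball u d = N \<inter> Q" using openin_open by blast
  have ball: "v \<in> ball u d" if v: "v \<in> U" "g v \<in> Q" for v
  proof -
    have "g v \<in> N" using rp v(1) unfolding regular_param_def by blast
    then have "g v \<in> g ` ball u d" unfolding Q(2) using v(2) by blast
    then obtain v' where "v' \<in> ball u d" "g v' = g v" by (auto simp: image_iff)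
    then show ?thesis using regular_param_inj_on[OF rp] dc(3) v(1) unfolding inj_on_def by blast
  qed
  show thesis
  proof (rule that[OF Q(1) _ dc(2)])
    have "g u \<in> g ` ball u d" using dc(1) by simp
    then show "g u \<in> Q" unfolding Q(2) by blast
    fix v w assume "v \<in> U" "w \<in> U" "g v \<in> Q" "g w \<in> Q"
    then show "c * norm (v - w) \<le> norm (g v - g w)" by (intro dc(4) ball)
  qed
qed

lemma Lipschitz_dist_less:
  assumes lip: "\<And>a b. a \<in> E \<Longrightarrow> b \<in> E \<Longrightarrow> norm (G a - G b) \<le> L * norm (a - b)"
    and "a \<in> E" "b \<in> E" "e > 0" "dist a b < e / (\<bar>L\<bar> + 1)"
  shows "dist (G a) (G b) < e"
proof -
  have "dist (G a) (G b) \<le> \<bar>L\<bar> * dist a b"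
    using lip[OF assms(2,3)] unfolding dist_norm by (meson abs_ge_self mult_right_mono norm_ge_zero order_trans)
  moreover have "\<bar>L\<bar> * dist a b + dist a b < e" using assms(5) by (simp add: field_simps)
  ultimately show ?thesis using zero_le_dist[of a b] by linarith
qed

text \<open>Pulled back by the chart inverse, G becomes locally Lipschitz, and locally Lipschitz maps
  between spaces of equal dimension preserve null sets.\<close>
lemma negligible_chart_preimage_Lipschitz_image:
  fixes g G :: "real^'m::finite \<Rightarrow> 'a::euclidean_space"
  assumes ch: "chart1 N U g" and nE: "negligible E"
    and lip: "\<And>a b. a \<in> E \<Longrightarrow> b \<in> E \<Longrightarrow> norm (G a - G b) \<le> L * norm (a - b)"
  shows "negligible {u \<in> U. g u \<in> G ` E}"
proof -
  obtain h where hom: "homeomorphism U (g ` U) g h"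
    using ch unfolding chart1_def regular_param_def by blast
  have hg: "\<And>x. x \<in> U \<Longrightarrow> h (g x) = x" using hom unfolding homeomorphism_def by blast
  define E' where "E' = {y \<in> E. G y \<in> g ` U}"
  have "{u \<in> U. g u \<in> G ` E} \<subseteq> (h \<circ> G) ` E'"
  proof
    fix u assume "u \<in> {u \<in> U. g u \<in> G ` E}"
    then obtain y where y: "u \<in> U" "y \<in> E" "g u = G y" by blast
    then have "y \<in> E'" unfolding E'_def by (metis (mono_tags, lifting) image_eqI mem_Collect_eq)
    moreover have "u = (h \<circ> G) y" using y(1) hg[of u] by (simp add: y(3)[symmetric])
    ultimately show "u \<in> (h \<circ> G) ` E'" by blast
  qed
  moreover have "negligible ((h \<circ> G) ` E')"
  proof (rule negligible_locally_Lipschitz_image)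
    show "negligible E'" by (rule negligible_subset[OF nE]) (auto simp: E'_def)
    fix y assume "y \<in> E'"
    then obtain u where u: "u \<in> U" "G y = g u" and yE: "y \<in> E" unfolding E'_def by auto
    obtain Q c where Q: "open Q" "g u \<in> Q" "c > 0"
      and bound: "\<And>v w. v \<in> U \<Longrightarrow> w \<in> U \<Longrightarrow> g v \<in> Q \<Longrightarrow> g w \<in> Q \<Longrightarrow> c * norm (v - w) \<le> norm (g v - g w)"
      using chart1_lower_Lipschitz_on_open_nbhd[OF ch u(1)] by metis
    obtain e where e: "e > 0" "ball (g u) e \<subseteq> Q" using Q(1,2) open_contains_ball by blast
    show "\<exists>T B. open T \<and> y \<in> T \<and> (\<forall>y' \<in> E' \<inter> T. norm ((h \<circ> G) y' - (h \<circ> G) y) \<le> B * norm (y' - y))"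
    proof (intro exI[of _ "ball y (e / (\<bar>L\<bar> + 1))"] exI[of _ "L / c"] conjI ballI)
      show "y \<in> ball y (e / (\<bar>L\<bar> + 1))" using e(1) by simp
      fix y' assume y': "y' \<in> E' \<inter> ball y (e / (\<bar>L\<bar> + 1))"
      then obtain v where v: "v \<in> U" "G y' = g v" and y'E: "y' \<in> E" unfolding E'_def by auto
      have "dist y' y < e / (\<bar>L\<bar> + 1)" using y' by (simp add: dist_commute)
      then have "dist (G y') (G y) < e" by (intro Lipschitz_dist_less[of E G L] lip y'E yE e(1))
      then have "g v \<in> Q" using e(2) u(2) v(2) by (auto simp: dist_commute)
      then have "c * norm (v - u) \<le> norm (G y' - G y)"
        using bound[OF v(1) u(1)] v(2) u(2) Q(2) by simp
      also have "\<dots> \<le> L * norm (y' - y)" by (rule lip[OF y'E yE])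
      finally show "norm ((h \<circ> G) y' - (h \<circ> G) y) \<le> L / c * norm (y' - y)"
        using Q(3) hg u v by (simp add: pos_le_divide_eq mult.commute)
    qed simp
  qed simp
  ultimately show ?thesis using negligible_subset by blast
qed

lemma nn_integral_indicator_negligible:
  assumes "negligible S"
  shows "(\<integral>\<^sup>+ u. indicator S u * f u \<partial>lborel) = 0"
proof -
  have "AE u in lebesgue. u \<notin> S" using assms AE_not_in negligible_iff_null_sets by blast
  then have "AE u in lborel. u \<notin> S" by (simp add: AE_completion_iff)
  then have "AE u in lborel. indicator S u * f u = 0" by eventually_elim simp
  from nn_integral_cong_AE[OF this] show ?thesis by simp
qed

lemma riem_vol_eq_0_if_negligible_in_charts:
  fixes N Z :: "'a::euclidean_space set"
  assumes "\<And>U (g :: real^'m \<Rightarrow> 'a). chart1 N U g \<Longrightarrow> negligible {u \<in> U. g u \<in> Z}"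
  shows "riem_vol TYPE('m::finite) N Z = 0"
proof -
  have piece: "(\<integral>\<^sup>+ u. indicator (U \<inter> g -` P) u * ennreal (gram_jac g u) \<partial>lborel) = 0"
    if "chart1 N U g" "P \<subseteq> Z \<inter> g ` U" for U and g :: "real^'m \<Rightarrow> 'a" and P
  proof (rule nn_integral_indicator_negligible)
    show "negligible (U \<inter> g -` P)"
      by (rule negligible_subset[OF assms[OF that(1)]]) (use that(2) in blast)
  qed
  show ?thesis
    unfolding riem_vol_def by (rule antisym[OF Sup_least zero_le]) (auto simp: piece)
qed

lemma riem_vol_Lipschitz_image_eq_0:
  fixes G :: "real^'m::finite \<Rightarrow> 'a::euclidean_space"
  assumes "negligible E" "\<And>a b. a \<in> E \<Longrightarrow> b \<in> E \<Longrightarrow> norm (G a - G b) \<le> L * norm (a - b)"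
    and "Z \<subseteq> G ` E"
  shows "riem_vol TYPE('m) N Z = 0"
proof (rule riem_vol_eq_0_if_negligible_in_charts)
  fix U and g :: "real^'m \<Rightarrow> 'a" assume "chart1 N U g"
  then have "negligible {u \<in> U. g u \<in> G ` E}"
    by (rule negligible_chart_preimage_Lipschitz_image[OF _ assms(1,2)])
  then show "negligible {u \<in> U. g u \<in> Z}"
    by (rule negligible_subset) (use assms(3) in blast)
qed

lemma gdist_le_path_len:
  assumes "valid_path \<gamma>" "path_image \<gamma> \<subseteq> M"
  shows "gdist M (pathstart \<gamma>) (pathfinish \<gamma>) \<le> ereal (path_len \<gamma>)"
  unfolding gdist_def using assms by (intro Inf_lower) blast

lemma C1_path_len_le:
  fixes \<gamma> :: "real \<Rightarrow> 'a::euclidean_space"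
  assumes der: "\<And>t. t \<in> {0..1} \<Longrightarrow> (\<gamma> has_vector_derivative D t) (at t)"
    and cont: "continuous_on {0..1} D" and bd: "\<And>t. t \<in> {0..1} \<Longrightarrow> norm (D t) \<le> B"
  shows "valid_path \<gamma>" and "path_len \<gamma> \<le> B"
proof -
  show "valid_path \<gamma>" unfolding valid_path_def
    by (rule C1_differentiable_imp_piecewise, unfold C1_differentiable_on_def, rule exI[of _ D])
      (use der cont in auto)
  have "path_len \<gamma> = integral {0..1} (\<lambda>t. norm (D t))"
    unfolding path_len_def by (rule integral_cong) (simp add: vector_derivative_at[OF der])
  also have "\<dots> \<le> integral {0..1} (\<lambda>t::real. B)"
    by (rule integral_le) (use bd in \<open>auto intro: integrable_continuous_real continuous_on_norm cont\<close>)
  finally show "path_len \<gamma> \<le> B" by simp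
qed

lemma gdist_chart_image_le:
  fixes g :: "real^'m::finite \<Rightarrow> 'a::euclidean_space"
  assumes der: "\<And>x. x \<in> U \<Longrightarrow> (g has_derivative blinfun_apply (f' x)) (at x)"
    and cont: "continuous_on U f'" and K: "convex K" "K \<subseteq> U"
    and bd: "\<And>x. x \<in> K \<Longrightarrow> norm (f' x) \<le> L" and gM: "g ` U \<subseteq> M"
    and ab: "a \<in> K" "b \<in> K"
  shows "gdist M (g a) (g b) \<le> ereal (L * norm (b - a))"
proof -
  define p where "p = (\<lambda>t::real. a + t *\<^sub>R (b - a))"
  define D where "D = (\<lambda>t. blinfun_apply (f' (p t)) (b - a))"
  have pK: "p t \<in> K" if "t \<in> {0..1}" for t
  proof -
    have "p t = (1 - t) *\<^sub>R a + t *\<^sub>R b" unfolding p_def by (simp add: algebra_simps)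
    then show ?thesis using K(1) ab that unfolding convex_def by auto
  qed
  have vd: "((g \<circ> p) has_vector_derivative D t) (at t)" if "t \<in> {0..1}" for t
  proof -
    have "(p has_derivative (\<lambda>s. s *\<^sub>R (b - a))) (at t)"
      unfolding p_def by (auto intro!: derivative_eq_intros)
    from has_derivative_compose[OF this der] pK[OF that] K(2)
    have "((g \<circ> p) has_derivative (\<lambda>s. f' (p t) (s *\<^sub>R (b - a)))) (at t)" by (auto simp: o_def)
    then show ?thesis unfolding has_vector_derivative_def D_def by (simp add: blinfun.scaleR_right)
  qed
  have "continuous_on {0..1} (f' \<circ> p)"
    by (rule continuous_on_compose[OF _ continuous_on_subset[OF cont]])
      (use pK K in \<open>auto simp: p_def intro!: continuous_intros\<close>)
  then have cD: "continuous_on {0..1} D"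
    unfolding D_def using blinfun.continuous_on[of "{0..1}" "\<lambda>t. f' (p t)" "\<lambda>_. b - a"] by (simp add: o_def)
  have bdD: "norm (D t) \<le> L * norm (b - a)" if "t \<in> {0..1}" for t
    unfolding D_def using norm_blinfun[of "f' (p t)" "b - a"] bd[OF pK[OF that]]
    by (meson mult_right_mono norm_ge_zero order_trans)
  have "(g \<circ> p) t \<in> M" if "t \<in> {0..1}" for t using pK[OF that] K(2) gM by auto
  then have "path_image (g \<circ> p) \<subseteq> M" unfolding path_image_def by blast
  moreover have "pathstart (g \<circ> p) = g a" "pathfinish (g \<circ> p) = g b"
    unfolding pathstart_def pathfinish_def p_def by auto
  ultimately show ?thesis
    using gdist_le_path_len[OF C1_path_len_le(1)[OF vd cD bdD]] C1_path_len_le(2)[OF vd cD bdD]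
    by (metis ereal_less_eq(3) order_trans)
qed

lemma C1_chart_Lipschitz_on_convex:
  fixes g :: "real^'m::finite \<Rightarrow> 'a::euclidean_space"
  assumes "C1_map U g" "open U" "compact K" "convex K" "K \<subseteq> U" "g ` U \<subseteq> M"
  obtains L where "L > 0"
    "\<And>a b. a \<in> K \<Longrightarrow> b \<in> K \<Longrightarrow> norm (g a - g b) \<le> L * norm (a - b)"
    "\<And>a b. a \<in> K \<Longrightarrow> b \<in> K \<Longrightarrow> gdist M (g a) (g b) \<le> ereal (L * norm (b - a))"
proof -
  obtain f' where der: "\<And>x. x \<in> U \<Longrightarrow> (g has_derivative blinfun_apply (f' x)) (at x)"
    and cont: "continuous_on U f'" using C1_mapE[OF assms(1)] by blast
  have "compact (f' ` K)"
    by (rule compact_continuous_image[OF continuous_on_subset[OF cont assms(5)] assms(3)])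
  then obtain L0 where L0: "\<And>x. x \<in> K \<Longrightarrow> norm (f' x) \<le> L0"
    using compact_imp_bounded bounded_iff by (metis imageI)
  define L where "L = max L0 1"
  have bd: "norm (f' x) \<le> L" if "x \<in> K" for x using L0[OF that] L_def by simp
  have "norm (g a - g b) \<le> L * norm (a - b)" if "a \<in> K" "b \<in> K" for a b
  proof (rule differentiable_bound[where f = g and S = K and f' = "\<lambda>x. blinfun_apply (f' x)"])
    fix x assume "x \<in> K"
    then show "(g has_derivative blinfun_apply (f' x)) (at x within K)"
      using der assms(5) has_derivative_at_withinI by blast
    show "onorm (blinfun_apply (f' x)) \<le> L" using bd[OF \<open>x \<in> K\<close>] by (simp add: norm_blinfun.rep_eq)
  qed (use assms that in auto)
  moreover have "L > 0" using L_def by simp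
  ultimately show thesis
    using that gdist_chart_image_le[OF der cont assms(4,5) bd assms(6)] by blast
qed

definition open_cube :: "real \<Rightarrow> (real^'m) set" where
  "open_cube c = box (\<chi> i. - c) (\<chi> i. c)"

definition closed_cube :: "real \<Rightarrow> (real^'m) set" where
  "closed_cube c = cbox (\<chi> i. - c) (\<chi> i. c)"

lemma mem_open_cube: "x \<in> open_cube c \<longleftrightarrow> (\<forall>i. \<bar>x $ i\<bar> < c)"
proof -
  have "(- c < t \<and> t < c) \<longleftrightarrow> \<bar>t\<bar> < c" for t :: real by arith
  then show ?thesis unfolding open_cube_def mem_box_cart by simp
qed

lemma mem_closed_cube: "x \<in> closed_cube c \<longleftrightarrow> (\<forall>i. \<bar>x $ i\<bar> \<le> c)"
proof -
  have "(- c \<le> t \<and> t \<le> c) \<longleftrightarrow> \<bar>t\<bar> \<le> c" for t :: real by arith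
  then show ?thesis unfolding closed_cube_def mem_box_cart by simp
qed

lemma open_cube_subset_closed_cube: "open_cube c \<subseteq> closed_cube c"
  unfolding open_cube_def closed_cube_def by (rule box_subset_cbox)

lemma open_open_cube: "open (open_cube c)"
  unfolding open_cube_def by (rule open_box)

lemma compact_closed_cube: "compact (closed_cube c)"
  unfolding closed_cube_def by (rule compact_cbox)

lemma convex_closed_cube: "convex (closed_cube c)"
  unfolding closed_cube_def by (rule convex_box)

lemma negligible_cube_frontier: "negligible (closed_cube c - open_cube c)"
  unfolding closed_cube_def open_cube_def by (rule negligible_frontier_interval)

lemma zero_in_open_cube: "c > 0 \<Longrightarrow> 0 \<in> open_cube c"
  by (simp add: mem_open_cube)

lemma closed_cube_subset_ball:
  fixes c r :: real
  assumes "CARD('m::finite) * c < r"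
  shows "closed_cube c \<subseteq> ball (0 :: real^'m) r"
proof
  fix x :: "real^'m" assume "x \<in> closed_cube c"
  then have "(\<Sum>i\<in>UNIV. \<bar>x $ i\<bar>) \<le> CARD('m) * c"
    using sum_bounded_above[of UNIV "\<lambda>i. \<bar>x $ i\<bar>" c] by (simp add: mem_closed_cube)
  then show "x \<in> ball 0 r" using norm_le_l1_cart[of x] assms by simp
qed

lemma closed_cube_subset_open:
  fixes S :: "(real^'m::finite) set"
  assumes "open S" "0 \<in> S"
  obtains c where "c > 0" "closed_cube c \<subseteq> S"
proof -
  obtain e where e: "e > 0" "ball 0 e \<subseteq> S" using assms open_contains_ball by blast
  define c where "c = e / (2 * CARD('m))"
  have "c > 0" "CARD('m) * c < e" unfolding c_def using e(1) by (simp_all add: field_simps)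
  then show thesis using that closed_cube_subset_ball e(2) by blast
qed

lemma hyperplane_embedding:
  fixes k :: "'n::finite"
  assumes "CARD('n) = Suc CARD('k::finite)"
  obtains \<beta> :: "'k::finite \<Rightarrow> 'n" and \<iota> :: "real^'k \<Rightarrow> real^'n"
  where "bij_betw \<beta> UNIV (-{k})" "linear \<iota>" "\<And>y. norm (\<iota> y) = norm y" "\<And>y. \<iota> y $ k = 0"
    "\<And>y j. \<iota> y $ \<beta> j = y $ j" "{x. x $ k = 0} \<subseteq> range \<iota>"
proof -
  have "card (-{k}) = CARD('k)"
    using card_Diff_subset[of "{k}" UNIV] assms by (simp add: Compl_eq_Diff_UNIV)
  then obtain \<beta> :: "'k \<Rightarrow> 'n" where \<beta>: "bij_betw \<beta> UNIV (-{k})"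
    using finite_same_card_bij[of "UNIV :: 'k set" "-{k}"] by auto
  define \<beta>' where "\<beta>' = inv_into UNIV \<beta>"
  have \<beta>k: "\<beta> j \<noteq> k" for j using \<beta> unfolding bij_betw_def by auto
  have \<beta>'\<beta>: "\<beta>' (\<beta> j) = j" for j
    using \<beta> unfolding \<beta>'_def bij_betw_def by (simp add: inv_into_f_f)
  have \<beta>\<beta>': "\<beta> (\<beta>' i) = i" if "i \<noteq> k" for i
    using \<beta> that unfolding \<beta>'_def bij_betw_def by (auto intro: f_inv_into_f)
  define \<iota> :: "real^'k \<Rightarrow> real^'n" where "\<iota> y = (\<chi> i. if i = k then 0 else y $ \<beta>' i)" for y
  have \<iota>k: "\<iota> y $ k = 0" for y unfolding \<iota>_def by simp
  have \<iota>\<beta>: "\<iota> y $ \<beta> j = y $ j" for y j unfolding \<iota>_def using \<beta>k \<beta>'\<beta> by simp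
  show thesis
  proof (rule that[OF \<beta> _ _ \<iota>k \<iota>\<beta>])
    show "linear \<iota>" by (rule linearI) (simp_all add: \<iota>_def vec_eq_iff)
    fix y
    have "(\<Sum>i\<in>UNIV. (norm (\<iota> y $ i))\<^sup>2) = (\<Sum>i\<in>-{k}. (norm (\<iota> y $ i))\<^sup>2)"
      by (rule sum.mono_neutral_right) (auto simp: \<iota>k)
    also have "\<dots> = (\<Sum>j\<in>UNIV. (norm (\<iota> y $ \<beta> j))\<^sup>2)"
      using sum.reindex_bij_betw[OF \<beta>, of "\<lambda>i. (norm (\<iota> y $ i))\<^sup>2"] by simp
    finally show "norm (\<iota> y) = norm y"
      unfolding norm_vec_def L2_set_def \<iota>\<beta> by simp
  next
    show "{x. x $ k = 0} \<subseteq> range \<iota>"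
    proof
      fix x :: "real^'n" assume "x \<in> {x. x $ k = 0}"
      then have "x = \<iota> (\<chi> j. x $ \<beta> j)" unfolding \<iota>_def vec_eq_iff using \<beta>\<beta>' by auto
      then show "x \<in> range \<iota>" by blast
    qed
  qed
qed

lemma hyperplane_embedding_cube_iff:
  assumes "bij_betw \<beta> UNIV (-{k})" "\<And>y j. \<iota> y $ \<beta> j = y $ j" "\<And>y. \<iota> y $ k = 0" "c > 0"
  shows "\<iota> y \<in> closed_cube c \<longleftrightarrow> y \<in> closed_cube c" and "\<iota> y \<in> open_cube c \<longleftrightarrow> y \<in> open_cube c"
proof -
  have all: "(\<forall>i. P (\<iota> y $ i)) \<longleftrightarrow> (\<forall>j. P (y $ j))" if "P 0" for P
  proof -
    have "i \<in> range \<beta>" if "i \<noteq> k" for i using assms(1) that unfolding bij_betw_def by auto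
    then show ?thesis using assms(2,3) \<open>P 0\<close> by (metis rangeE)
  qed
  show "\<iota> y \<in> closed_cube c \<longleftrightarrow> y \<in> closed_cube c"
    unfolding mem_closed_cube using all[of "\<lambda>t. \<bar>t\<bar> \<le> c"] assms(4) by simp
  show "\<iota> y \<in> open_cube c \<longleftrightarrow> y \<in> open_cube c"
    unfolding mem_open_cube using all[of "\<lambda>t. \<bar>t\<bar> < c"] assms(4) by simp
qed

definition grid_cell :: "real \<Rightarrow> real^'m \<Rightarrow> 'm \<Rightarrow> int" where
  "grid_cell s x = (\<lambda>i. \<lfloor>x $ i / s\<rfloor>)"

lemma grid_cell_eq_imp_norm_diff_le:
  fixes x y :: "real^'m::finite" and s :: real
  assumes "grid_cell s x = grid_cell s y" "s > 0"
  shows "norm (x - y) \<le> CARD('m) * s"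
proof -
  have "\<bar>(x - y) $ i\<bar> \<le> s" for i
  proof -
    have "\<lfloor>x $ i / s\<rfloor> = \<lfloor>y $ i / s\<rfloor>" using assms(1) unfolding grid_cell_def by meson
    then have "\<bar>x $ i / s - y $ i / s\<bar> < 1" by linarith
    then show ?thesis using assms(2) by (simp add: diff_divide_distrib[symmetric] divide_less_eq)
  qed
  then have "(\<Sum>i\<in>UNIV. \<bar>(x - y) $ i\<bar>) \<le> CARD('m) * s"
    using sum_bounded_above[of UNIV "\<lambda>i. \<bar>(x - y) $ i\<bar>" s] by simp
  then show ?thesis using norm_le_l1_cart[of "x - y"] by linarith
qed

lemma card_floor_range_le:
  fixes c s :: real
  assumes "c > 0" "s > 0"
  shows "real (card {\<lfloor>-c/s\<rfloor>..\<lfloor>c/s\<rfloor>}) \<le> 2 * c / s + 2"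
proof -
  have "-c/s \<le> c/s" using assms by (simp add: divide_right_mono)
  then have "\<lfloor>-c/s\<rfloor> \<le> \<lfloor>c/s\<rfloor>" by (rule floor_mono)
  then have "real (card {\<lfloor>-c/s\<rfloor>..\<lfloor>c/s\<rfloor>}) = real_of_int (\<lfloor>c/s\<rfloor> - \<lfloor>-c/s\<rfloor> + 1)" by simp
  also have "\<dots> \<le> 2 * c / s + 2"
  proof -
    have "real_of_int \<lfloor>c/s\<rfloor> \<le> c/s" "-c/s - 1 < real_of_int \<lfloor>-c/s\<rfloor>" "2 * c / s = c/s + c/s"
      by linarith+
    then show ?thesis by (simp only: of_int_add of_int_diff of_int_1)
  qed
  finally show ?thesis .
qed

text \<open>Indices of the grid cells of side s that can meet the face x$i = \<sigma> of the cube of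
  half side c.\<close>
definition cube_face_cells :: "real \<Rightarrow> real \<Rightarrow> 'm \<Rightarrow> real \<Rightarrow> ('m \<Rightarrow> int) set" where
  "cube_face_cells c s i \<sigma> = PiE UNIV (\<lambda>l. if l = i then {\<lfloor>\<sigma>/s\<rfloor>} else {\<lfloor>-c/s\<rfloor>..\<lfloor>c/s\<rfloor>})"

lemma finite_cube_face_cells: "finite (cube_face_cells c s i \<sigma> :: ('m::finite \<Rightarrow> int) set)"
  unfolding cube_face_cells_def by (rule finite_PiE) auto

lemma card_cube_face_cells:
  "card (cube_face_cells c s i \<sigma> :: ('m::finite \<Rightarrow> int) set) = card {\<lfloor>-c/s\<rfloor>..\<lfloor>c/s\<rfloor>} ^ (CARD('m) - 1)"
proof -
  have "card (cube_face_cells c s i \<sigma> :: ('m \<Rightarrow> int) set)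
      = (\<Prod>l\<in>UNIV. card (if l = i then {\<lfloor>\<sigma>/s\<rfloor>} else {\<lfloor>-c/s\<rfloor>..\<lfloor>c/s\<rfloor>}))"
    unfolding cube_face_cells_def by (rule card_PiE) simp
  also have "\<dots> = (\<Prod>l\<in>UNIV. if l = i then 1 else card {\<lfloor>-c/s\<rfloor>..\<lfloor>c/s\<rfloor>})"
    by (rule prod.cong) auto
  also have "\<dots> = (\<Prod>l\<in>UNIV - {i}. card {\<lfloor>-c/s\<rfloor>..\<lfloor>c/s\<rfloor>})"
    by (subst prod.remove[of UNIV i]) (auto intro: prod.cong)
  finally show ?thesis by simp
qed

lemma grid_cell_cube_frontier_subset:
  fixes c s :: real
  assumes s: "s > 0"
  shows "grid_cell s ` (closed_cube c - open_cube c :: (real^'m::finite) set)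
    \<subseteq> (\<Union>i. \<Union>\<sigma>\<in>{-c, c}. cube_face_cells c s i \<sigma>)"
proof
  fix z assume "z \<in> grid_cell s ` (closed_cube c - open_cube c :: (real^'m) set)"
  then obtain x :: "real^'m" where x: "x \<in> closed_cube c - open_cube c" "z = grid_cell s x" by auto
  then have xc: "\<And>l. \<bar>x $ l\<bar> \<le> c" and "\<exists>i. \<not> \<bar>x $ i\<bar> < c"
    by (auto simp: mem_closed_cube mem_open_cube)
  then obtain i where i: "\<bar>x $ i\<bar> = c" by (meson antisym not_less)
  obtain \<sigma> where \<sigma>: "\<sigma> \<in> {-c, c}" "x $ i = \<sigma>" using i by (cases "x $ i \<ge> 0") auto
  have "\<lfloor>-c/s\<rfloor> \<le> \<lfloor>x $ l / s\<rfloor> \<and> \<lfloor>x $ l / s\<rfloor> \<le> \<lfloor>c/s\<rfloor>" for l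
  proof -
    have "-c \<le> x $ l" "x $ l \<le> c" using xc[of l] by arith+
    then have "-c / s \<le> x $ l / s" "x $ l / s \<le> c / s"
      using s by (simp_all only: divide_right_mono less_imp_le)
    then show ?thesis by (auto intro: floor_mono)
  qed
  then have "z \<in> cube_face_cells c s i \<sigma>"
    using \<sigma> unfolding cube_face_cells_def x(2) grid_cell_def by (auto simp: PiE_iff)
  then show "z \<in> (\<Union>i. \<Union>\<sigma>\<in>{-c, c}. cube_face_cells c s i \<sigma>)" using \<sigma> by blast
qed

lemma card_grid_cells_cube_frontier:
  fixes c s :: real
  assumes c: "c > 0" and s: "s > 0"
  defines "E \<equiv> closed_cube c - open_cube c :: (real^'m::finite) set"
  shows "finite (grid_cell s ` E)"
    and "real (card (grid_cell s ` E)) \<le> 2 * real CARD('m) * (2 * c / s + 2) ^ (CARD('m) - 1)"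
proof -
  define m where "m = card {\<lfloor>-c/s\<rfloor>..\<lfloor>c/s\<rfloor>}"
  have sub: "grid_cell s ` E \<subseteq> (\<Union>i. \<Union>\<sigma>\<in>{-c, c}. cube_face_cells c s i \<sigma>)"
    unfolding E_def by (rule grid_cell_cube_frontier_subset[OF s])
  have finU: "finite (\<Union>i. \<Union>\<sigma>\<in>{-c, c}. cube_face_cells c s i \<sigma> :: ('m \<Rightarrow> int) set)"
    by (simp add: finite_cube_face_cells)
  then show "finite (grid_cell s ` E)" using sub by (rule finite_subset[rotated])
  have "card (grid_cell s ` E) \<le> card (\<Union>i. \<Union>\<sigma>\<in>{-c, c}. cube_face_cells c s i \<sigma> :: ('m \<Rightarrow> int) set)"
    by (rule card_mono[OF finU sub])
  also have "\<dots> \<le> (\<Sum>i\<in>UNIV. card (\<Union>\<sigma>\<in>{-c, c}. cube_face_cells c s i \<sigma> :: ('m \<Rightarrow> int) set))"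
    by (rule card_UN_le) simp
  also have "\<dots> \<le> (\<Sum>i\<in>UNIV. \<Sum>\<sigma>\<in>{-c, c}. card (cube_face_cells c s i \<sigma> :: ('m \<Rightarrow> int) set))"
    by (intro sum_mono card_UN_le) simp
  also have "\<dots> = CARD('m) * (2 * m ^ (CARD('m) - 1))"
    using c by (simp add: card_cube_face_cells m_def)
  finally have "real (card (grid_cell s ` E)) \<le> real (CARD('m) * (2 * m ^ (CARD('m) - 1)))"
    by (simp only: of_nat_le_iff)
  also have "\<dots> = CARD('m) * (2 * real m ^ (CARD('m) - 1))" by simp
  also have "\<dots> \<le> CARD('m) * (2 * (2 * c / s + 2) ^ (CARD('m) - 1))"
    using card_floor_range_le[OF c s] unfolding m_def by (intro mult_left_mono power_mono) auto
  finally show "real (card (grid_cell s ` E)) \<le> 2 * real CARD('m) * (2 * c / s + 2) ^ (CARD('m) - 1)"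
    by simp
qed

text \<open>One centre per occupied grid cell suffices, since G moves points of a common cell by at
  most L times the cell diameter in the geodesic distance.\<close>
lemma covnum_le_card_grid_cells:
  fixes G :: "real^'m::finite \<Rightarrow> 'a::euclidean_space"
  assumes "L > 0" "s > 0" "finite (grid_cell s ` E)" "D \<subseteq> G ` E" "D \<subseteq> M"
    and gd: "\<And>a b. a \<in> E \<Longrightarrow> b \<in> E \<Longrightarrow> gdist M (G a) (G b) \<le> ereal (L * norm (b - a))"
  shows "covnum M D (L * CARD('m) * s) \<le> enat (card (grid_cell s ` E))"
proof -
  define r where "r = L * CARD('m) * s"
  define pt where "pt p = (SOME x. x \<in> E \<and> G x = p)" for p
  have pt: "pt p \<in> E \<and> G (pt p) = p" if "p \<in> D" for p
  proof -
    have "\<exists>x. x \<in> E \<and> G x = p" using assms(4) that by blast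
    then show ?thesis unfolding pt_def by (rule someI_ex)
  qed
  define cell where "cell p = grid_cell s (pt p)" for p
  define rep where "rep z = (SOME p. p \<in> D \<and> cell p = z)" for z
  have rep: "rep z \<in> D \<and> cell (rep z) = z" if "z \<in> cell ` D" for z
  proof -
    have "\<exists>p. p \<in> D \<and> cell p = z" using that by blast
    then show ?thesis unfolding rep_def by (rule someI_ex)
  qed
  define X where "X = rep ` cell ` D"
  have cells: "cell ` D \<subseteq> grid_cell s ` E" unfolding cell_def using pt by blast
  then have fin: "finite (cell ` D)" using assms(3) finite_subset by blast
  have finX: "finite X" unfolding X_def using fin by blast
  have XD: "X \<subseteq> D" unfolding X_def using rep by blast
  have "card X \<le> card (grid_cell s ` E)"
    unfolding X_def using card_image_le[OF fin, of rep] card_mono[OF assms(3) cells] by linarith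
  have cover: "D \<subseteq> (\<Union>x\<in>X. gball M x r)"
  proof
    fix p assume p: "p \<in> D"
    define x where "x = rep (cell p)"
    have x: "x \<in> X" "x \<in> D" "cell x = cell p" unfolding x_def X_def using rep p by auto
    have "grid_cell s (pt p) = grid_cell s (pt x)" using x(3) unfolding cell_def by simp
    then have "norm (pt p - pt x) \<le> CARD('m) * s"
      using assms(2) by (rule grid_cell_eq_imp_norm_diff_le)
    then have "L * norm (pt p - pt x) \<le> r" unfolding r_def using assms(1) by simp
    moreover have "gdist M x p \<le> ereal (L * norm (pt p - pt x))"
      using gd[of "pt x" "pt p"] pt[OF x(2)] pt[OF p] by simp
    ultimately have "gdist M x p \<le> ereal r" by (meson ereal_less_eq(3) order_trans)
    then show "p \<in> (\<Union>x\<in>X. gball M x r)" using x(1) p assms(5) unfolding gball_def by blast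
  qed
  have "covnum M D r \<le> enat (card X)"
    unfolding covnum_def using finX XD cover by (intro Inf_lower CollectI exI[of _ X]) simp
  then show ?thesis unfolding r_def using \<open>card X \<le> _\<close> by (simp add: order_trans)
qed

lemma Limsup_covnum_cube_frontier_finite:
  fixes G :: "real^'m::finite \<Rightarrow> 'a::euclidean_space"
  assumes c: "c > 0" and L: "L > 0"
    and D: "D \<subseteq> G ` (closed_cube c - open_cube c)" "D \<subseteq> M"
    and gd: "\<And>a b. a \<in> closed_cube c - open_cube c \<Longrightarrow> b \<in> closed_cube c - open_cube c \<Longrightarrow>
      gdist M (G a) (G b) \<le> ereal (L * norm (b - a))"
  shows "Limsup (at_right 0) (\<lambda>r. ereal (r ^ (CARD('m) - 1)) * ereal_of_enat (covnum M D r)) < \<infinity>"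
proof -
  define E where "E = (closed_cube c - open_cube c :: (real^'m) set)"
  define n where "n = CARD('m) - 1"
  define B where "B = 2 * real CARD('m) * (2 * c * L * CARD('m) + 2) ^ n"
  have "ereal (r ^ n) * ereal_of_enat (covnum M D r) \<le> ereal B" if r: "0 < r" "r < 1" for r
  proof -
    define s where "s = r / (L * CARD('m))"
    have s: "s > 0" and rs: "r = L * CARD('m) * s" unfolding s_def using r L by auto
    note cells = card_grid_cells_cube_frontier[OF c s, where 'm = 'm]
    have "covnum M D r \<le> enat (card (grid_cell s ` E))"
      unfolding rs E_def by (rule covnum_le_card_grid_cells[OF L s cells(1) D]) (rule gd)
    then have "ereal_of_enat (covnum M D r) \<le> ereal_of_enat (enat (card (grid_cell s ` E)))"
      by (simp only: ereal_of_enat_le_iff)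
    also have "\<dots> = real (card (grid_cell s ` E))" by simp
    also have "\<dots> \<le> 2 * real CARD('m) * (2 * c / s + 2) ^ n"
      using cells(2) unfolding n_def E_def by simp
    finally have "ereal (r ^ n) * ereal_of_enat (covnum M D r)
        \<le> ereal (r ^ n) * ereal (2 * real CARD('m) * (2 * c / s + 2) ^ n)"
      by (rule ereal_mult_left_mono) (use r in simp)
    also have "\<dots> = ereal (2 * real CARD('m) * (r * (2 * c / s + 2)) ^ n)"
      by (simp only: times_ereal.simps power_mult_distrib mult.assoc mult.left_commute)
    also have "r * (2 * c / s + 2) = 2 * c * L * CARD('m) + 2 * r"
      using s unfolding rs by (simp add: field_simps)
    also have "ereal (2 * real CARD('m) * (2 * c * L * CARD('m) + 2 * r) ^ n) \<le> ereal B"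
      unfolding B_def ereal_less_eq(3) using r c L by (intro mult_left_mono power_mono) auto
    finally show ?thesis by simp
  qed
  then have "eventually (\<lambda>r. ereal (r ^ n) * ereal_of_enat (covnum M D r) \<le> ereal B) (at_right 0)"
    unfolding eventually_at_right_field by (intro exI[of _ 1]) auto
  then have "Limsup (at_right 0) (\<lambda>r. ereal (r ^ n) * ereal_of_enat (covnum M D r)) \<le> ereal B"
    by (rule Limsup_bounded)
  then show ?thesis unfolding n_def by (rule le_less_trans) simp
qed

lemma riem_vol_mbdry_chart_image_cube:
  fixes g :: "real^'n::finite \<Rightarrow> 'a::euclidean_space"
  assumes ch: "chart1 M U g" and K: "closed_cube c \<subseteq> U"
  shows "riem_vol TYPE('n) M (mbdry M (g ` open_cube c)) = 0"
proof -
  have rp: "regular_param M U g" and C1: "C1_map U g" using ch unfolding chart1_def by auto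
  have oU: "open U" and gU: "g ` U \<subseteq> M" using rp unfolding regular_param_def by auto
  obtain L where "\<And>a b. a \<in> closed_cube c \<Longrightarrow> b \<in> closed_cube c \<Longrightarrow> norm (g a - g b) \<le> L * norm (a - b)"
    using C1_chart_Lipschitz_on_convex[OF C1 oU compact_closed_cube convex_closed_cube K gU] by metis
  then show ?thesis
    using riem_vol_Lipschitz_image_eq_0[OF negligible_cube_frontier, where G = g and L = L]
      regular_param_image_mclosure_mbdry(2)[OF rp open_open_cube compact_closed_cube open_cube_subset_closed_cube K]
    by blast
qed

text \<open>\<iota> parametrises the hyperplane x$k = 0, which the boundary chart maps onto the boundary
  of A; the cube frontier meets that hyperplane in the image under \<iota> of a cube frontier of one
  dimension less.\<close>
lemma bdry_rel_boundary_chart_cube: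
  fixes g :: "real^'n::finite \<Rightarrow> 'a::euclidean_space" and \<iota> :: "real^'k::finite \<Rightarrow> real^'n"
  assumes rp: "regular_param M U g" and hs: "g ` (U \<inter> {x. 0 \<le> x $ k}) = g ` U \<inter> A"
    and K: "closed_cube c \<subseteq> U" and c: "c > 0"
    and \<iota>: "bij_betw \<beta> UNIV (-{k})" "\<And>y j. \<iota> y $ \<beta> j = y $ j" "\<And>y. \<iota> y $ k = 0"
      "{x. x $ k = 0} \<subseteq> range \<iota>"
  shows "bdry_rel M A (g ` open_cube c) \<subseteq> (g \<circ> \<iota>) ` (closed_cube c - open_cube c)"
    and "(g \<circ> \<iota>) ` (closed_cube c - open_cube c) \<subseteq> mbdry M A"
proof -
  note cube_iff = hyperplane_embedding_cube_iff[OF \<iota>(1,2,3) c]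
  show "bdry_rel M A (g ` open_cube c) \<subseteq> (g \<circ> \<iota>) ` (closed_cube c - open_cube c)"
  proof
    fix p assume "p \<in> bdry_rel M A (g ` open_cube c)"
    then have p: "p \<in> mbdry M A" "p \<in> mbdry M (g ` open_cube c)"
      using bdry_rel_subset_mbdry by blast+
    then obtain x where x: "x \<in> closed_cube c - open_cube c" "p = g x"
      using regular_param_image_mclosure_mbdry(2)[OF rp open_open_cube compact_closed_cube open_cube_subset_closed_cube K]
      by blast
    then have "x $ k = 0" using boundary_chart_mbdry_iff[OF rp hs] p(1) K by blast
    then obtain y where "x = \<iota> y" using \<iota>(4) by blast
    then show "p \<in> (g \<circ> \<iota>) ` (closed_cube c - open_cube c)" using x cube_iff by auto
  qed
  show "(g \<circ> \<iota>) ` (closed_cube c - open_cube c) \<subseteq> mbdry M A"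
    using boundary_chart_mbdry_iff[OF rp hs] K \<iota>(3) cube_iff by auto
qed

lemma boundary_chart_cube_bdry_rel_small:
  fixes g :: "real^'n::finite \<Rightarrow> 'a::euclidean_space"
  assumes ch: "chart1 M U g" and hs: "g ` (U \<inter> {x. 0 \<le> x $ k}) = g ` U \<inter> A"
    and K: "closed_cube c \<subseteq> U" and c: "c > 0" and card: "CARD('n) = Suc CARD('k::finite)"
  shows "riem_vol TYPE('k) (mbdry M A) (bdry_rel M A (g ` open_cube c)) = 0"
    and "Limsup (at_right 0) (\<lambda>r. ereal (r ^ (CARD('k) - 1))
           * ereal_of_enat (covnum M (bdry_rel M A (g ` open_cube c)) r)) < \<infinity>"
proof -
  have rp: "regular_param M U g" and C1: "C1_map U g" using ch unfolding chart1_def by auto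
  have oU: "open U" and gU: "g ` U \<subseteq> M" using rp unfolding regular_param_def by auto
  obtain L where L: "L > 0"
    "\<And>a b. a \<in> closed_cube c \<Longrightarrow> b \<in> closed_cube c \<Longrightarrow> norm (g a - g b) \<le> L * norm (a - b)"
    "\<And>a b. a \<in> closed_cube c \<Longrightarrow> b \<in> closed_cube c \<Longrightarrow> gdist M (g a) (g b) \<le> ereal (L * norm (b - a))"
    using C1_chart_Lipschitz_on_convex[OF C1 oU compact_closed_cube convex_closed_cube K gU] by blast
  obtain \<beta> :: "'k \<Rightarrow> 'n" and \<iota> :: "real^'k \<Rightarrow> real^'n" where \<iota>: "bij_betw \<beta> UNIV (-{k})" "linear \<iota>"
    "\<And>y. norm (\<iota> y) = norm y" "\<And>y. \<iota> y $ k = 0" "\<And>y j. \<iota> y $ \<beta> j = y $ j" "{x. x $ k = 0} \<subseteq> range \<iota>"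
    using hyperplane_embedding[OF card] by blast
  define E where "E = (closed_cube c - open_cube c :: (real^'k) set)"
  have \<iota>K: "\<iota> a \<in> closed_cube c" if "a \<in> E" for a
    using hyperplane_embedding_cube_iff[OF \<iota>(1,5,4) c] that unfolding E_def by blast
  have \<iota>dist: "norm (\<iota> a - \<iota> b) = norm (a - b)" for a b
    using \<iota>(3)[of "a - b"] linear_diff[OF \<iota>(2)] by simp
  note brel = bdry_rel_boundary_chart_cube[OF rp hs K c \<iota>(1,5,4,6), folded E_def]
  have "norm ((g \<circ> \<iota>) a - (g \<circ> \<iota>) b) \<le> L * norm (a - b)" if "a \<in> E" "b \<in> E" for a b
    using L(2)[OF \<iota>K \<iota>K] \<iota>dist that by simp
  then show "riem_vol TYPE('k) (mbdry M A) (bdry_rel M A (g ` open_cube c)) = 0"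
    using riem_vol_Lipschitz_image_eq_0[OF _ _ brel(1)] negligible_cube_frontier unfolding E_def by blast
  have gd: "gdist M ((g \<circ> \<iota>) a) ((g \<circ> \<iota>) b) \<le> ereal (L * norm (b - a))" if "a \<in> E" "b \<in> E" for a b
    using L(3)[OF \<iota>K \<iota>K] \<iota>dist that by simp
  show "Limsup (at_right 0) (\<lambda>r. ereal (r ^ (CARD('k) - 1))
           * ereal_of_enat (covnum M (bdry_rel M A (g ` open_cube c)) r)) < \<infinity>"
    by (rule Limsup_covnum_cube_frontier_finite[OF c L(1) brel(1)[unfolded E_def] bdry_rel_subset])
      (rule gd[unfolded E_def])
qed

theorem lemma6p13:
  fixes M A V :: "'a::euclidean_space set" and x0 :: 'a
  assumes "2 \<le> CARD('n::finite)" and "CARD('n) \<le> DIM('a)"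
    and "CARD('n) = Suc CARD('k::finite)"
    and "C2_submanifold TYPE('n) M" and "closed M"
    and "compact A" and "C2_submfd_with_bdry TYPE('n) M A"
    and "x0 \<in> mbdry M A" and "openin (top_of_set M) V" and "x0 \<in> V"
  shows "\<exists>W. openin (top_of_set M) W \<and> x0 \<in> W \<and> mclosure M W \<subseteq> V
           \<and> riem_vol TYPE('n) M (mbdry M W) = 0
           \<and> riem_vol TYPE('k) (mbdry M A) (bdry_rel M A W) = 0
           \<and> Limsup (at_right 0) (\<lambda>r. ereal (r ^ (CARD('n) - 2)) * ereal_of_enat (covnum M (bdry_rel M A W) r)) < \<infinity>"
proof -
  obtain U :: "(real^'n) set" and g k where ch: "chart2 M U g" and "0 \<in> U" "g 0 = x0"
    and hs: "g ` (U \<inter> {x. 0 \<le> x $ k}) = g ` U \<inter> A"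
    using assms(7,8) unfolding C2_submfd_with_bdry_def by blast
  then have ch1: "chart1 M U g" and rp: "regular_param M U g"
    using chart2_imp_chart1 unfolding chart1_def by blast+
  obtain OV where OV: "open OV" "V = M \<inter> OV" using assms(9) openin_open by blast
  have oU: "open U" and gU: "g ` U \<subseteq> M" using rp unfolding regular_param_def by auto
  have "open (U \<inter> g -` OV)"
    by (rule continuous_open_preimage[OF regular_param_continuous_on[OF rp] oU OV(1)])
  moreover have "0 \<in> U \<inter> g -` OV" using \<open>0 \<in> U\<close> \<open>g 0 = x0\<close> assms(10) OV(2) by auto
  ultimately obtain c where c: "c > 0" "closed_cube c \<subseteq> U \<inter> g -` OV"
    using closed_cube_subset_open by blast
  then have K: "closed_cube c \<subseteq> U" by blast
  define W where "W = g ` open_cube c"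
  have "openin (top_of_set M) W"
    unfolding W_def using K open_cube_subset_closed_cube
    by (intro regular_param_openin_image[OF rp open_open_cube]) blast
  moreover have "x0 \<in> W" unfolding W_def using zero_in_open_cube[OF c(1)] \<open>g 0 = x0\<close> by blast
  moreover have "mclosure M W \<subseteq> V"
    using regular_param_image_mclosure_mbdry(1)[OF rp open_open_cube compact_closed_cube open_cube_subset_closed_cube K]
      c(2) OV(2) gU K unfolding W_def by blast
  moreover have "riem_vol TYPE('n) M (mbdry M W) = 0"
    unfolding W_def by (rule riem_vol_mbdry_chart_image_cube[OF ch1 K])
  moreover note boundary_chart_cube_bdry_rel_small[OF ch1 hs K c(1) assms(3), folded W_def]
  moreover have "CARD('n) - 2 = CARD('k) - 1" using assms(3) by simp
  ultimately show ?thesis by (intro exI[of _ W]) simp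
qed

end
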